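(* Let ${\bm\pi}^*$ be a probability vector on a finite set $\mathbb{A}$ with all entries positive and $\varepsilon=\min_a\pi^*_a$. Then for every probability vector ${\bm\pi}$ on $\mathbb{A}$ with all entries positive, \[ \|{\bm\pi}^*-{\bm\pi}\|_1\ge 2\varepsilon\sqrt{1-\exp\!\big(-D_{\mathrm{KL}}({\bm\pi}^*\|{\bm\pi})/\varepsilon\big)}. \]
   Context: (In the paper, ${\bm\pi}^*$ is the KL projection of the OMWU initialization onto the equilibrium set, which has full support.) *)

theory Defs
  imports "HOL-Analysis.Analysis"
begin

definition pos_prob_vec :: "'a set \<Rightarrow> ('a \<Rightarrow> real) \<Rightarrow> bool" where
  "pos_prob_vec A p \<longleftrightarrow> (\<forall>a\<in>A. p a > 0) \<and> (\<Sum>a\<in>A. p a) = 1"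

definition KL_div :: "'a set \<Rightarrow> ('a \<Rightarrow> real) \<Rightarrow> ('a \<Rightarrow> real) \<Rightarrow> real" where
  "KL_div A p q = (\<Sum>a\<in>A. p a * ln (p a / q a))"

definition l1_dist :: "'a set \<Rightarrow> ('a \<Rightarrow> real) \<Rightarrow> ('a \<Rightarrow> real) \<Rightarrow> real" where
  "l1_dist A p q = (\<Sum>a\<in>A. \<bar>p a - q a\<bar>)"

end

theory Submission
  imports Defs
begin

text \<open>
  Put \<open>g(x) = -\<epsilon> ln (1 + x/\<epsilon>)\<close>, a convex function with \<open>g(0) = 0\<close>. By concavity of
  \<open>ln\<close>, a summand \<open>\<pi>\<^sup>*\<^sub>a ln (\<pi>\<^sup>*\<^sub>a / \<pi>\<^sub>a)\<close> of the divergence is at most \<open>g(\<pi>\<^sub>a - \<pi>\<^sup>*\<^sub>a)\<close>, because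
  \<open>\<pi>\<^sup>*\<^sub>a \<ge> \<epsilon>\<close>. With \<open>t\<close> half the \<open>l\<^sub>1\<close> distance, every deviation \<open>\<pi>\<^sub>a - \<pi>\<^sup>*\<^sub>a\<close> lies in
  \<open>[-t, t]\<close> and the positive and the negative deviations each add up to \<open>t\<close>; so convexity
  bounds the divergence by \<open>g(t) + g(-t) = -\<epsilon> ln (1 - (t/\<epsilon>)\<^sup>2)\<close>, which rearranges to the claim.
\<close>

lemma scaled_ln_one_plus_le:
  fixes l c :: real
  assumes "0 \<le> l" "l \<le> 1" "c > -1"
  shows "l * ln (1 + c) \<le> ln (1 + l * c)"
proof -
  have "(1 - l) * ln 1 + l * ln (1 + c) \<le> ln ((1 - l) *\<^sub>R 1 + l *\<^sub>R (1 + c))"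
    by (rule concave_onD[OF ln_concave]) (use assms in auto)
  moreover have "(1 - l) *\<^sub>R 1 + l *\<^sub>R (1 + c) = 1 + l * c"
    by (simp add: algebra_simps)
  ultimately show ?thesis by (simp add: algebra_simps)
qed

lemma neg_ln_one_plus_scaled_le:
  fixes \<epsilon> l y :: real
  assumes "\<epsilon> > 0" "0 \<le> l" "l \<le> 1" "y > -\<epsilon>"
  shows "- \<epsilon> * ln (1 + l * y / \<epsilon>) \<le> l * (- \<epsilon> * ln (1 + y / \<epsilon>))"
proof -
  have "l * ln (1 + y / \<epsilon>) \<le> ln (1 + l * (y / \<epsilon>))"
    by (rule scaled_ln_one_plus_le) (use assms in \<open>auto simp: field_simps\<close>)
  then show ?thesis
    using mult_left_mono[of _ _ \<epsilon>] assms(1) by (fastforce simp: algebra_simps)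
qed

lemma mult_ln_ratio_le_of_ge:
  fixes \<epsilon> w x :: real
  assumes "\<epsilon> > 0" "\<epsilon> \<le> w" "x > -\<epsilon>"
  shows "w * ln (w / (w + x)) \<le> - \<epsilon> * ln (1 + x / \<epsilon>)"
proof -
  have w: "w > 0" "w + x > 0"
    using assms by linarith+
  have "(\<epsilon> / w) * ln (1 + x / \<epsilon>) \<le> ln (1 + (\<epsilon> / w) * (x / \<epsilon>))"
    by (rule scaled_ln_one_plus_le) (use assms w in \<open>auto simp: field_simps\<close>)
  also have "1 + (\<epsilon> / w) * (x / \<epsilon>) = (w + x) / w"
    using assms w by (simp add: field_simps)
  finally have "\<epsilon> * ln (1 + x / \<epsilon>) \<le> w * ln ((w + x) / w)"
    using mult_left_mono[of _ _ w] w by (fastforce simp: field_simps)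
  moreover have "ln ((w + x) / w) = - ln (w / (w + x))"
    using w by (simp add: ln_div)
  ultimately show ?thesis by simp
qed

lemma mult_ln_ratio_le_convex_split:
  fixes \<epsilon> w p t :: real
  assumes "\<epsilon> > 0" "\<epsilon> \<le> w" "0 < t" "t < \<epsilon>" "\<bar>p - w\<bar> \<le> t"
  shows "w * ln (w / p) \<le>
    max (p - w) 0 / t * (- \<epsilon> * ln (1 + t / \<epsilon>))
    + max (w - p) 0 / t * (- \<epsilon> * ln (1 + (- t) / \<epsilon>))"
proof -
  have "w * ln (w / p) \<le> - \<epsilon> * ln (1 + (p - w) / \<epsilon>)"
    using mult_ln_ratio_le_of_ge[of \<epsilon> w "p - w"] assms by simp
  also have "\<dots> \<le> max (p - w) 0 / t * (- \<epsilon> * ln (1 + t / \<epsilon>))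
      + max (w - p) 0 / t * (- \<epsilon> * ln (1 + (- t) / \<epsilon>))"
  proof (cases "w \<le> p")
    case True
    then show ?thesis
      using neg_ln_one_plus_scaled_le[of \<epsilon> "(p - w) / t" t] assms by simp
  next
    case False
    then show ?thesis
      using neg_ln_one_plus_scaled_le[of \<epsilon> "(w - p) / t" "- t"] assms by simp
  qed
  finally show ?thesis .
qed

lemma sum_pos_part_eq_half_sum_abs:
  fixes f :: "'a \<Rightarrow> real"
  assumes "(\<Sum>a\<in>A. f a) = 0"
  shows "(\<Sum>a\<in>A. max (f a) 0) = (\<Sum>a\<in>A. \<bar>f a\<bar>) / 2"
proof -
  have "(\<Sum>a\<in>A. max (f a) 0) = (\<Sum>a\<in>A. (\<bar>f a\<bar> + f a) / 2)"
    by (intro sum.cong) auto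
  also have "\<dots> = ((\<Sum>a\<in>A. \<bar>f a\<bar>) + (\<Sum>a\<in>A. f a)) / 2"
    by (simp add: sum.distrib flip: sum_divide_distrib)
  finally show ?thesis
    using assms by simp
qed

lemma KL_div_le_of_l1_dist_lt:
  fixes A :: "'a set" and q p :: "'a \<Rightarrow> real" and \<epsilon> :: real
  assumes "finite A" "\<epsilon> > 0" "\<And>a. a \<in> A \<Longrightarrow> \<epsilon> \<le> q a"
    and "(\<Sum>a\<in>A. q a) = (\<Sum>a\<in>A. p a)"
    and "l1_dist A q p < 2 * \<epsilon>"
  shows "KL_div A q p \<le> - \<epsilon> * ln (1 - (l1_dist A q p / (2 * \<epsilon>))\<^sup>2)"
proof -
  define t where "t = l1_dist A q p / 2"
  define d where "d a = p a - q a" for a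
  have "(\<Sum>a\<in>A. d a) = 0"
    using assms(4) by (simp add: d_def sum_subtractf)
  moreover from this have "(\<Sum>a\<in>A. - d a) = 0"
    by (simp add: sum_negf)
  moreover have "(\<Sum>a\<in>A. \<bar>d a\<bar>) = 2 * t"
    by (simp add: t_def l1_dist_def d_def abs_minus_commute)
  ultimately have pos_sum: "(\<Sum>a\<in>A. max (d a) 0) = t"
    and neg_sum: "(\<Sum>a\<in>A. max (- d a) 0) = t"
    using sum_pos_part_eq_half_sum_abs[of d A] sum_pos_part_eq_half_sum_abs[of "\<lambda>a. - d a" A]
    by simp_all
  have d_le: "\<bar>d a\<bar> \<le> t" if "a \<in> A" for a
  proof -
    have "max (d a) 0 \<le> (\<Sum>a\<in>A. max (d a) 0)" "max (- d a) 0 \<le> (\<Sum>a\<in>A. max (- d a) 0)"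
      by (rule member_le_sum[OF that _ assms(1)]; simp)+
    then have "max (d a) 0 \<le> t" "max (- d a) 0 \<le> t"
      by (simp_all only: pos_sum neg_sum)
    then show ?thesis by linarith
  qed
  have t_lt: "t < \<epsilon>"
    using assms(5) by (simp add: t_def)
  have "0 \<le> t"
    by (simp add: t_def l1_dist_def sum_nonneg)
  show ?thesis
  proof (cases "t = 0")
    case True
    then have "KL_div A q p = 0"
      using d_le unfolding KL_div_def d_def by (intro sum.neutral) fastforce
    with True show ?thesis
      by (simp add: t_def)
  next
    case False
    then have t: "0 < t" "t < \<epsilon>"
      using \<open>0 \<le> t\<close> t_lt by simp_all
    define g where "g x = - \<epsilon> * ln (1 + x / \<epsilon>)" for x
    have "q a * ln (q a / p a) \<le> max (d a) 0 / t * g t + max (- d a) 0 / t * g (- t)"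
      if "a \<in> A" for a
      using mult_ln_ratio_le_convex_split[of \<epsilon> "q a" t "p a"] assms(2,3) t d_le that
      by (simp add: g_def d_def abs_minus_commute)
    then have "KL_div A q p \<le> (\<Sum>a\<in>A. max (d a) 0 / t * g t + max (- d a) 0 / t * g (- t))"
      unfolding KL_div_def by (rule sum_mono)
    also have "\<dots> = g t + g (- t)"
      using t by (simp add: sum.distrib pos_sum neg_sum flip: sum_distrib_right sum_divide_distrib)
    also have "\<dots> = - \<epsilon> * ln ((1 + t / \<epsilon>) * (1 - t / \<epsilon>))"
    proof -
      have "1 + t / \<epsilon> > 0" "1 - t / \<epsilon> > 0"
        using t assms(2) by (simp_all add: field_simps)
      then show ?thesis
        using t by (simp add: g_def ln_mult distrib_left)
    qed
    also have "(1 + t / \<epsilon>) * (1 - t / \<epsilon>) = 1 - (l1_dist A q p / (2 * \<epsilon>))\<^sup>2"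
      by (simp add: t_def power2_eq_square algebra_simps)
    finally show ?thesis .
  qed
qed

lemma sqrt_one_minus_exp_le:
  fixes \<epsilon> s D :: real
  assumes "\<epsilon> > 0" "0 \<le> s" "s < 1" "D \<le> - \<epsilon> * ln (1 - s\<^sup>2)"
  shows "sqrt (1 - exp (- D / \<epsilon>)) \<le> s"
proof -
  have pos: "1 - s\<^sup>2 > 0"
    using assms(2,3) by (simp add: power_less_one_iff abs_less_iff)
  have "ln (1 - s\<^sup>2) \<le> - D / \<epsilon>"
    using assms(1,4) by (simp add: field_simps)
  then have "1 - s\<^sup>2 \<le> exp (- D / \<epsilon>)"
    using pos by (metis exp_le_cancel_iff exp_ln)
  then have "sqrt (1 - exp (- D / \<epsilon>)) \<le> sqrt (s\<^sup>2)"
    by (intro real_sqrt_le_mono) linarith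
  then show ?thesis
    using assms(2) by simp
qed

theorem mainTheorem15:
  fixes A :: "'a set" and pstar p :: "'a \<Rightarrow> real" and \<epsilon> :: real
  assumes "finite A"
    and "pos_prob_vec A pstar"
    and "\<epsilon> = Min (pstar ` A)"
    and "pos_prob_vec A p"
  shows "l1_dist A pstar p \<ge> 2 * \<epsilon> * sqrt (1 - exp (- KL_div A pstar p / \<epsilon>))"
proof -
  have "A \<noteq> {}" and same_mass: "(\<Sum>a\<in>A. pstar a) = (\<Sum>a\<in>A. p a)"
    using assms(2,4) by (auto simp: pos_prob_vec_def)
  then have \<epsilon>_pos: "\<epsilon> > 0" and \<epsilon>_le: "\<And>a. a \<in> A \<Longrightarrow> \<epsilon> \<le> pstar a"
    using assms(1-3) by (auto simp: pos_prob_vec_def Min_gr_iff)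
  define L where "L = l1_dist A pstar p"
  have "0 \<le> L"
    by (simp add: L_def l1_dist_def sum_nonneg)
  have "sqrt (1 - exp (- KL_div A pstar p / \<epsilon>)) \<le> L / (2 * \<epsilon>)"
  proof (cases "L < 2 * \<epsilon>")
    case True
    then show ?thesis
      using \<open>0 \<le> L\<close> \<epsilon>_pos \<epsilon>_le assms(1) KL_div_le_of_l1_dist_lt[of A \<epsilon> pstar p] same_mass
      by (intro sqrt_one_minus_exp_le) (auto simp: L_def)
  next
    case False
    have "sqrt (1 - exp (- KL_div A pstar p / \<epsilon>)) \<le> 1"
      by simp
    moreover have "1 \<le> L / (2 * \<epsilon>)"
      using False \<epsilon>_pos by simp
    ultimately show ?thesis
      by linarith
  qed
  then show ?thesis
    using \<epsilon>_pos by (simp add: L_def field_simps)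
qed

end
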